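(* Let $G$ and $H$ be non-archimedean topological groups and suppose $H$ is a $G$-group. Then the topological semidirect product $H\rtimes G$ is non-archimedean.
   Context: A topological group is non-archimedean if it has a local base at the identity consisting of open subgroups. $H$ is a $G$-group if there is a continuous action $G\times H\to H$ such that each translation $h\mapsto gh$ is a group automorphism of $H$. $H\rtimes G$ is $H\times G$ with the product topology and multiplication $(h_1,g_1)(h_2,g_2)=(h_1\cdot g_1h_2,\ g_1g_2)$. *)

theory Defs
  imports "HOL-Analysis.Analysis" "HOL-Algebra.Group"
begin

definition topological_group :: "('a, 'b) monoid_scheme \<Rightarrow> 'a topology \<Rightarrow> bool" where
  "topological_group G T \<longleftrightarrow>
     group G \<and> topspace T = carrier G \<and>
     continuous_map (prod_topology T T) T (\<lambda>(x, y). x \<otimes>\<^bsub>G\<^esub> y) \<and>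
     continuous_map T T (\<lambda>x. inv\<^bsub>G\<^esub> x)"

definition non_archimedean :: "('a, 'b) monoid_scheme \<Rightarrow> 'a topology \<Rightarrow> bool" where
  "non_archimedean G T \<longleftrightarrow>
     topological_group G T \<and>
     (\<forall>U. openin T U \<and> \<one>\<^bsub>G\<^esub> \<in> U \<longrightarrow>
          (\<exists>V. subgroup V G \<and> openin T V \<and> V \<subseteq> U))"

definition G_group ::
  "('g, 'c) monoid_scheme \<Rightarrow> 'g topology \<Rightarrow> ('h, 'd) monoid_scheme \<Rightarrow> 'h topology
     \<Rightarrow> ('g \<Rightarrow> 'h \<Rightarrow> 'h) \<Rightarrow> bool" where
  "G_group G TG H TH act \<longleftrightarrow>
     (\<forall>h\<in>carrier H. act \<one>\<^bsub>G\<^esub> h = h) \<and>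
     (\<forall>g1\<in>carrier G. \<forall>g2\<in>carrier G. \<forall>h\<in>carrier H.
        act (g1 \<otimes>\<^bsub>G\<^esub> g2) h = act g1 (act g2 h)) \<and>
     continuous_map (prod_topology TG TH) TH (\<lambda>(g, h). act g h) \<and>
     (\<forall>g\<in>carrier G. act g \<in> iso H H)"

definition semidirect_product ::
  "('h, 'd) monoid_scheme \<Rightarrow> ('g, 'c) monoid_scheme \<Rightarrow> ('g \<Rightarrow> 'h \<Rightarrow> 'h)
     \<Rightarrow> ('h \<times> 'g) monoid" where
  "semidirect_product H G act =
     \<lparr>carrier = carrier H \<times> carrier G,
      mult = (\<lambda>(h1, g1) (h2, g2). (h1 \<otimes>\<^bsub>H\<^esub> act g1 h2, g1 \<otimes>\<^bsub>G\<^esub> g2)),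
      one = (\<one>\<^bsub>H\<^esub>, \<one>\<^bsub>G\<^esub>)\<rparr>"

end

theory Submission
  imports Defs
begin

text \<open>
  The semidirect product \<open>S = H \<rtimes> G\<close> is a group for any action of \<open>G\<close> on \<open>H\<close>
  by automorphisms, and with the product topology it is a topological group because its
  multiplication and inversion are built from those of \<open>G\<close>, \<open>H\<close> and the continuous action.
  For non-archimedeanity, take a basic neighbourhood \<open>V \<times> N\<close> of the identity. Choose an open
  subgroup \<open>V\<^sub>0 \<subseteq> V\<close> of \<open>H\<close>. Continuity of the action at \<open>(1,1)\<close> yields open subgroups
  \<open>W \<subseteq> N\<close> of \<open>G\<close> and \<open>V'\<close> of \<open>H\<close> with \<open>W \<cdot> V' \<subseteq> V\<^sub>0\<close>. The \<open>W\<close>-invariant core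
  \<open>K = {h \<in> V\<^sub>0. W \<cdot> h \<subseteq> V\<^sub>0}\<close> is a \<open>W\<close>-invariant subgroup containing \<open>V'\<close>, hence open,
  and \<open>K \<times> W\<close> is then an open subgroup of \<open>S\<close> inside \<open>V \<times> N\<close>.
\<close>

section \<open>Actions by automorphisms and the semidirect product\<close>

definition acts_by_automorphisms ::
  "('g, 'c) monoid_scheme \<Rightarrow> ('h, 'd) monoid_scheme \<Rightarrow> ('g \<Rightarrow> 'h \<Rightarrow> 'h) \<Rightarrow> bool" where
  "acts_by_automorphisms G H act \<longleftrightarrow>
     (\<forall>h\<in>carrier H. act \<one>\<^bsub>G\<^esub> h = h) \<and>
     (\<forall>g1\<in>carrier G. \<forall>g2\<in>carrier G. \<forall>h\<in>carrier H.
        act (g1 \<otimes>\<^bsub>G\<^esub> g2) h = act g1 (act g2 h)) \<and>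
     (\<forall>g\<in>carrier G. act g \<in> iso H H)"

lemma G_group_acts_by_automorphisms:
  "G_group G TG H TH act \<Longrightarrow> acts_by_automorphisms G H act"
  by (simp add: G_group_def acts_by_automorphisms_def)

lemma acts_by_automorphismsD:
  assumes "group H" and "acts_by_automorphisms G H act" and g: "g \<in> carrier G"
  shows action_closed: "\<And>h. h \<in> carrier H \<Longrightarrow> act g h \<in> carrier H"
    and action_mult: "\<And>x y. x \<in> carrier H \<Longrightarrow> y \<in> carrier H \<Longrightarrow>
                        act g (x \<otimes>\<^bsub>H\<^esub> y) = act g x \<otimes>\<^bsub>H\<^esub> act g y"
    and action_one: "act g \<one>\<^bsub>H\<^esub> = \<one>\<^bsub>H\<^esub>"
    and action_inv: "\<And>h. h \<in> carrier H \<Longrightarrow> act g (inv\<^bsub>H\<^esub> h) = inv\<^bsub>H\<^esub> act g h"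
proof -
  have "act g \<in> hom H H"
    using assms by (simp add: acts_by_automorphisms_def iso_def)
  then interpret group_hom H H "act g"
    using \<open>group H\<close> by (simp add: group_hom_def group_hom_axioms_def)
  show "\<And>h. h \<in> carrier H \<Longrightarrow> act g h \<in> carrier H"
    and "\<And>x y. x \<in> carrier H \<Longrightarrow> y \<in> carrier H \<Longrightarrow> act g (x \<otimes>\<^bsub>H\<^esub> y) = act g x \<otimes>\<^bsub>H\<^esub> act g y"
    and "act g \<one>\<^bsub>H\<^esub> = \<one>\<^bsub>H\<^esub>"
    and "\<And>h. h \<in> carrier H \<Longrightarrow> act g (inv\<^bsub>H\<^esub> h) = inv\<^bsub>H\<^esub> act g h"
    by simp_all
qed

lemma action_compose:
  "\<lbrakk>acts_by_automorphisms G H act; g \<in> carrier G; g' \<in> carrier G; h \<in> carrier H\<rbrakk>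
     \<Longrightarrow> act (g \<otimes>\<^bsub>G\<^esub> g') h = act g (act g' h)"
  by (simp add: acts_by_automorphisms_def)

lemma action_unit:
  "\<lbrakk>acts_by_automorphisms G H act; h \<in> carrier H\<rbrakk> \<Longrightarrow> act \<one>\<^bsub>G\<^esub> h = h"
  by (simp add: acts_by_automorphisms_def)

lemma semidirect_product_carrier [simp]:
  "carrier (semidirect_product H G act) = carrier H \<times> carrier G"
  by (simp add: semidirect_product_def)

lemma semidirect_product_one [simp]:
  "\<one>\<^bsub>semidirect_product H G act\<^esub> = (\<one>\<^bsub>H\<^esub>, \<one>\<^bsub>G\<^esub>)"
  by (simp add: semidirect_product_def)

lemma semidirect_product_mult:
  "p \<otimes>\<^bsub>semidirect_product H G act\<^esub> q =
     (fst p \<otimes>\<^bsub>H\<^esub> act (snd p) (fst q), snd p \<otimes>\<^bsub>G\<^esub> snd q)"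
  by (simp add: semidirect_product_def split_def)

definition sdp_inv ::
  "('h, 'd) monoid_scheme \<Rightarrow> ('g, 'c) monoid_scheme \<Rightarrow> ('g \<Rightarrow> 'h \<Rightarrow> 'h) \<Rightarrow> 'h \<times> 'g \<Rightarrow> 'h \<times> 'g" where
  "sdp_inv H G act p = (act (inv\<^bsub>G\<^esub> snd p) (inv\<^bsub>H\<^esub> fst p), inv\<^bsub>G\<^esub> snd p)"

definition invariant_core :: "('g \<Rightarrow> 'h \<Rightarrow> 'h) \<Rightarrow> 'g set \<Rightarrow> 'h set \<Rightarrow> 'h set" where
  "invariant_core act W V = {h \<in> V. \<forall>w\<in>W. act w h \<in> V}"

context
  fixes G :: "('g, 'c) monoid_scheme" and H :: "('h, 'd) monoid_scheme"
    and act :: "'g \<Rightarrow> 'h \<Rightarrow> 'h"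
  assumes G: "group G" and H: "group H" and aut: "acts_by_automorphisms G H act"
begin

interpretation G: group G by (rule G)
interpretation H: group H by (rule H)

lemmas action_rules =
  action_closed[OF H aut] action_mult[OF H aut] action_one[OF H aut]
  action_inv[OF H aut] action_compose[OF aut] action_unit[OF aut]

lemma sdp_inv_left:
  "p \<in> carrier H \<times> carrier G \<Longrightarrow>
     sdp_inv H G act p \<otimes>\<^bsub>semidirect_product H G act\<^esub> p = (\<one>\<^bsub>H\<^esub>, \<one>\<^bsub>G\<^esub>)"
  by (auto simp: sdp_inv_def semidirect_product_mult action_rules action_mult[OF H aut, symmetric])

lemma semidirect_product_group: "group (semidirect_product H G act)"
proof (rule groupI)
  fix x y assume "x \<in> carrier (semidirect_product H G act)" "y \<in> carrier (semidirect_product H G act)"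
  then show "x \<otimes>\<^bsub>semidirect_product H G act\<^esub> y \<in> carrier (semidirect_product H G act)"
    by (auto simp: semidirect_product_mult action_rules)
next
  fix x y z
  assume "x \<in> carrier (semidirect_product H G act)" "y \<in> carrier (semidirect_product H G act)"
    "z \<in> carrier (semidirect_product H G act)"
  then show "x \<otimes>\<^bsub>semidirect_product H G act\<^esub> y \<otimes>\<^bsub>semidirect_product H G act\<^esub> z =
             x \<otimes>\<^bsub>semidirect_product H G act\<^esub> (y \<otimes>\<^bsub>semidirect_product H G act\<^esub> z)"
    by (auto simp: semidirect_product_mult action_rules H.m_assoc G.m_assoc)
next
  fix x assume "x \<in> carrier (semidirect_product H G act)"
  then show "\<one>\<^bsub>semidirect_product H G act\<^esub> \<otimes>\<^bsub>semidirect_product H G act\<^esub> x = x"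
    by (auto simp: semidirect_product_mult action_rules)
next
  fix x assume "x \<in> carrier (semidirect_product H G act)"
  then show "\<exists>y\<in>carrier (semidirect_product H G act). y \<otimes>\<^bsub>semidirect_product H G act\<^esub> x =
                                                   \<one>\<^bsub>semidirect_product H G act\<^esub>"
    using sdp_inv_left by (intro bexI[of _ "sdp_inv H G act x"]) (auto simp: sdp_inv_def action_rules)
qed (simp)

lemma semidirect_product_inv:
  "p \<in> carrier H \<times> carrier G \<Longrightarrow> inv\<^bsub>semidirect_product H G act\<^esub> p = sdp_inv H G act p"
  using group.inv_equality[OF semidirect_product_group] sdp_inv_left
  by (auto simp: sdp_inv_def action_rules)

lemma semidirect_product_subgroup:
  assumes K: "subgroup K H" and W: "subgroup W G"
    and invariant: "\<And>w k. w \<in> W \<Longrightarrow> k \<in> K \<Longrightarrow> act w k \<in> K"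
  shows "subgroup (K \<times> W) (semidirect_product H G act)"
proof (rule group.subgroupI[OF semidirect_product_group])
  show "K \<times> W \<subseteq> carrier (semidirect_product H G act)"
    using subgroup.subset[OF K] subgroup.subset[OF W] by auto
  show "K \<times> W \<noteq> {}"
    using subgroup.one_closed[OF K] subgroup.one_closed[OF W] by blast
next
  fix p assume p: "p \<in> K \<times> W"
  then have "p \<in> carrier H \<times> carrier G"
    using subgroup.subset[OF K] subgroup.subset[OF W] by auto
  then show "inv\<^bsub>semidirect_product H G act\<^esub> p \<in> K \<times> W"
    using p invariant subgroup.m_inv_closed[OF K] subgroup.m_inv_closed[OF W]
    by (auto simp: semidirect_product_inv sdp_inv_def)
next
  fix p q assume "p \<in> K \<times> W" "q \<in> K \<times> W"
  then show "p \<otimes>\<^bsub>semidirect_product H G act\<^esub> q \<in> K \<times> W"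
    using invariant subgroup.m_closed[OF K] subgroup.m_closed[OF W]
    by (auto simp: semidirect_product_mult)
qed

lemma invariant_core_subgroup:
  assumes W: "W \<subseteq> carrier G" and V: "subgroup V H"
  shows "subgroup (invariant_core act W V) H"
proof (rule H.subgroupI)
  have V_carrier: "V \<subseteq> carrier H" using V by (rule subgroup.subset)
  show "invariant_core act W V \<subseteq> carrier H"
    using V_carrier by (auto simp: invariant_core_def)
  have "act w \<one>\<^bsub>H\<^esub> = \<one>\<^bsub>H\<^esub>" if "w \<in> W" for w
    using that W action_rules(3) by blast
  then show "invariant_core act W V \<noteq> {}"
    using subgroup.one_closed[OF V] by (auto simp: invariant_core_def)
  show "inv\<^bsub>H\<^esub> h \<in> invariant_core act W V" if "h \<in> invariant_core act W V" for h
    using that V_carrier W subgroup.m_inv_closed[OF V]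
    by (auto simp: invariant_core_def action_rules subset_iff)
  show "h \<otimes>\<^bsub>H\<^esub> k \<in> invariant_core act W V"
    if "h \<in> invariant_core act W V" "k \<in> invariant_core act W V" for h k
    using that V_carrier W subgroup.m_closed[OF V]
    by (auto simp: invariant_core_def action_rules subset_iff)
qed

lemma invariant_core_invariant:
  assumes W: "subgroup W G" and V: "V \<subseteq> carrier H"
    and "w \<in> W" and "h \<in> invariant_core act W V"
  shows "act w h \<in> invariant_core act W V"
proof -
  have "act w' (act w h) \<in> V" if "w' \<in> W" for w'
  proof -
    have "act (w' \<otimes>\<^bsub>G\<^esub> w) h \<in> V"
      using assms that subgroup.m_closed[OF W] by (auto simp: invariant_core_def)
    moreover have "act (w' \<otimes>\<^bsub>G\<^esub> w) h = act w' (act w h)"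
      using assms that subgroup.subset[OF W] by (intro action_rules(5)) (auto simp: invariant_core_def)
    ultimately show ?thesis
      by simp
  qed
  then show ?thesis
    using assms by (auto simp: invariant_core_def)
qed

end

section \<open>Topological groups\<close>

lemma continuous_map_group_mult:
  assumes "topological_group G T" "continuous_map Z T f" "continuous_map Z T g"
  shows "continuous_map Z T (\<lambda>x. f x \<otimes>\<^bsub>G\<^esub> g x)"
proof -
  have "continuous_map (prod_topology T T) T (\<lambda>(x, y). x \<otimes>\<^bsub>G\<^esub> y)"
    using assms(1) by (simp add: topological_group_def)
  from continuous_map_compose[OF continuous_map_pairedI[OF assms(2,3)] this] show ?thesis
    by (simp add: o_def)
qed

lemma continuous_map_group_inv:
  assumes "topological_group G T" "continuous_map Z T f"
  shows "continuous_map Z T (\<lambda>x. inv\<^bsub>G\<^esub> f x)"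
proof -
  have "continuous_map T T (\<lambda>x. inv\<^bsub>G\<^esub> x)"
    using assms(1) by (simp add: topological_group_def)
  from continuous_map_compose[OF assms(2) this] show ?thesis
    by (simp add: o_def)
qed

lemma continuous_map_action:
  assumes "G_group G TG H TH act" "continuous_map Z TG f" "continuous_map Z TH k"
  shows "continuous_map Z TH (\<lambda>x. act (f x) (k x))"
proof -
  have "continuous_map (prod_topology TG TH) TH (\<lambda>(g, h). act g h)"
    using assms(1) by (simp add: G_group_def)
  from continuous_map_compose[OF continuous_map_pairedI[OF assms(2,3)] this] show ?thesis
    by (simp add: o_def)
qed

lemma continuous_map_fst_comp:
  "continuous_map Z (prod_topology X Y) f \<Longrightarrow> continuous_map Z X (\<lambda>x. fst (f x))"
  using continuous_map_fst_of by (simp add: o_def)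

lemma continuous_map_snd_comp:
  "continuous_map Z (prod_topology X Y) f \<Longrightarrow> continuous_map Z Y (\<lambda>x. snd (f x))"
  using continuous_map_snd_of by (simp add: o_def)

lemma topological_group_semidirect_product:
  assumes G: "topological_group G TG" and H: "topological_group H TH"
    and act: "G_group G TG H TH act"
  shows "topological_group (semidirect_product H G act) (prod_topology TH TG)"
proof -
  let ?S = "semidirect_product H G act" and ?P = "prod_topology TH TG"
  have groups: "group G" "group H"
    using G H by (simp_all add: topological_group_def)
  note aut = G_group_acts_by_automorphisms[OF act]
  note continuous = continuous_map_group_mult[OF G] continuous_map_group_mult[OF H]
    continuous_map_group_inv[OF G] continuous_map_group_inv[OF H]
    continuous_map_action[OF act] continuous_map_fst continuous_map_snd
    continuous_map_fst_comp[OF continuous_map_fst] continuous_map_fst_comp[OF continuous_map_snd]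
    continuous_map_snd_comp[OF continuous_map_fst] continuous_map_snd_comp[OF continuous_map_snd]
  have "continuous_map (prod_topology ?P ?P) ?P
     (\<lambda>p. (fst (fst p) \<otimes>\<^bsub>H\<^esub> act (snd (fst p)) (fst (snd p)), snd (fst p) \<otimes>\<^bsub>G\<^esub> snd (snd p)))"
    by (intro continuous_map_pairedI continuous)
  then have mult: "continuous_map (prod_topology ?P ?P) ?P (\<lambda>(p, q). p \<otimes>\<^bsub>?S\<^esub> q)"
    by (simp add: semidirect_product_mult split_def)
  have "continuous_map ?P ?P (sdp_inv H G act)"
    unfolding sdp_inv_def by (intro continuous_map_pairedI continuous)
  moreover have "topspace ?P = carrier ?S"
    using G H by (simp add: topological_group_def)
  ultimately have inv: "continuous_map ?P ?P (\<lambda>p. inv\<^bsub>?S\<^esub> p)"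
    by (auto intro: continuous_map_eq simp: semidirect_product_inv[OF groups aut])
  show ?thesis
    using semidirect_product_group[OF groups aut] mult inv \<open>topspace ?P = carrier ?S\<close>
    by (simp add: topological_group_def)
qed

text \<open>A subgroup containing an open neighbourhood of the identity is open, being the union
  of the translates of that neighbourhood by its elements.\<close>
lemma subgroup_openin_if_contains_nbhd:
  assumes T: "topological_group H T" and K: "subgroup K H"
    and V: "openin T V" "\<one>\<^bsub>H\<^esub> \<in> V" "V \<subseteq> K"
  shows "openin T K"
proof -
  interpret H: group H using T by (simp add: topological_group_def)
  have carrier: "topspace T = carrier H" using T by (simp add: topological_group_def)
  have K_carrier: "K \<subseteq> carrier H" using K by (rule subgroup.subset)
  have translate_open: "openin T {x \<in> topspace T. inv\<^bsub>H\<^esub> k \<otimes>\<^bsub>H\<^esub> x \<in> V}" if "k \<in> K" for k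
  proof (rule openin_continuous_map_preimage[OF _ V(1)])
    show "continuous_map T T (\<lambda>x. inv\<^bsub>H\<^esub> k \<otimes>\<^bsub>H\<^esub> x)"
      using that K_carrier carrier
      by (intro continuous_map_group_mult[OF T] continuous_map_id[unfolded id_def]) auto
  qed
  have "K = (\<Union>k\<in>K. {x \<in> topspace T. inv\<^bsub>H\<^esub> k \<otimes>\<^bsub>H\<^esub> x \<in> V})"
  proof (intro equalityI subsetI)
    fix x assume "x \<in> K"
    then show "x \<in> (\<Union>k\<in>K. {x \<in> topspace T. inv\<^bsub>H\<^esub> k \<otimes>\<^bsub>H\<^esub> x \<in> V})"
      using K_carrier carrier V(2) by (intro UN_I[of x]) auto
  next
    fix x assume "x \<in> (\<Union>k\<in>K. {x \<in> topspace T. inv\<^bsub>H\<^esub> k \<otimes>\<^bsub>H\<^esub> x \<in> V})"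
    then obtain k where k: "k \<in> K" and x: "x \<in> carrier H" and kx: "inv\<^bsub>H\<^esub> k \<otimes>\<^bsub>H\<^esub> x \<in> V"
      using carrier by auto
    have "x = k \<otimes>\<^bsub>H\<^esub> (inv\<^bsub>H\<^esub> k \<otimes>\<^bsub>H\<^esub> x)"
      using k x K_carrier by (auto simp: H.m_assoc[symmetric])
    also have "\<dots> \<in> K"
      using k kx V(3) subgroup.m_closed[OF K] by auto
    finally show "x \<in> K" .
  qed
  then show ?thesis
    using translate_open by (metis (no_types, lifting) openin_Union imageE)
qed

section \<open>Non-archimedean groups and the invariant core\<close>

text \<open>Continuity of the action at \<open>(1, 1)\<close> in non-archimedean terms: for every neighbourhood
  \<open>V\<close> of \<open>1\<close> in \<open>H\<close> there are open subgroups \<open>W\<close> of \<open>G\<close> (inside a prescribed neighbourhood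
  \<open>N\<close>) and \<open>V'\<close> of \<open>H\<close> with \<open>W \<cdot> V' \<subseteq> V\<close>.\<close>
lemma action_small_open_subgroups:
  assumes naG: "non_archimedean G TG" and naH: "non_archimedean H TH"
    and act: "G_group G TG H TH act"
    and V: "openin TH V" "\<one>\<^bsub>H\<^esub> \<in> V" and N: "openin TG N" "\<one>\<^bsub>G\<^esub> \<in> N"
  obtains W V' where "subgroup W G" "openin TG W" "W \<subseteq> N"
    and "subgroup V' H" "openin TH V'" "\<And>w v. w \<in> W \<Longrightarrow> v \<in> V' \<Longrightarrow> act w v \<in> V"
proof -
  define C where "C = {p \<in> topspace (prod_topology TG TH). (\<lambda>(g, h). act g h) p \<in> V}"
  have "openin (prod_topology TG TH) C"
    unfolding C_def using act V(1) by (intro openin_continuous_map_preimage) (simp_all add: G_group_def)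
  moreover have "\<one>\<^bsub>G\<^esub> \<in> carrier G" "\<one>\<^bsub>H\<^esub> \<in> carrier H"
    using naG naH by (simp_all add: non_archimedean_def topological_group_def monoid.one_closed[OF group.is_monoid])
  then have "(\<one>\<^bsub>G\<^esub>, \<one>\<^bsub>H\<^esub>) \<in> C"
    using naG naH V(2) action_unit[OF G_group_acts_by_automorphisms[OF act]]
    by (auto simp: C_def non_archimedean_def topological_group_def)
  ultimately obtain P Q where P: "openin TG P" "\<one>\<^bsub>G\<^esub> \<in> P"
    and Q: "openin TH Q" "\<one>\<^bsub>H\<^esub> \<in> Q" and PQ: "P \<times> Q \<subseteq> C"
    by (metis openin_prod_topology_alt)
  obtain W where "subgroup W G" "openin TG W" "W \<subseteq> P \<inter> N"
    using naG P N unfolding non_archimedean_def by (meson IntI openin_Int)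
  moreover obtain V' where "subgroup V' H" "openin TH V'" "V' \<subseteq> Q"
    using naH Q unfolding non_archimedean_def by blast
  moreover have "act w v \<in> V" if "w \<in> P" "v \<in> Q" for w v
    using PQ that by (auto simp: C_def)
  ultimately show thesis
    using that by blast
qed

text \<open>The key construction: arbitrarily small open subgroups \<open>K\<close> of \<open>H\<close> and \<open>W\<close> of \<open>G\<close> with
  \<open>K\<close> invariant under \<open>W\<close>, obtained as the \<open>W\<close>-invariant core of a small open subgroup.\<close>
lemma invariant_open_subgroups:
  assumes naG: "non_archimedean G TG" and naH: "non_archimedean H TH"
    and act: "G_group G TG H TH act"
    and V: "openin TH V" "\<one>\<^bsub>H\<^esub> \<in> V" and N: "openin TG N" "\<one>\<^bsub>G\<^esub> \<in> N"
  obtains K W where "subgroup K H" "openin TH K" "K \<subseteq> V"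
    and "subgroup W G" "openin TG W" "W \<subseteq> N"
    and "\<And>w k. w \<in> W \<Longrightarrow> k \<in> K \<Longrightarrow> act w k \<in> K"
proof -
  have TG: "topological_group G TG" and TH: "topological_group H TH"
    using naG naH by (simp_all add: non_archimedean_def)
  then have groups: "group G" "group H"
    by (simp_all add: topological_group_def)
  note aut = G_group_acts_by_automorphisms[OF act]
  obtain V0 where V0: "subgroup V0 H" "openin TH V0" "V0 \<subseteq> V"
    using naH V unfolding non_archimedean_def by blast
  obtain W V' where W: "subgroup W G" "openin TG W" "W \<subseteq> N"
    and V': "subgroup V' H" "openin TH V'" and small: "\<And>w v. w \<in> W \<Longrightarrow> v \<in> V' \<Longrightarrow> act w v \<in> V0"
    using action_small_open_subgroups[OF naG naH act V0(2) subgroup.one_closed[OF V0(1)] N]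
    by blast
  let ?K = "invariant_core act W V0"
  have K: "subgroup ?K H"
    using invariant_core_subgroup[OF groups aut subgroup.subset[OF W(1)] V0(1)] .
  have "V' \<subseteq> ?K"
  proof
    fix v assume v: "v \<in> V'"
    have "act \<one>\<^bsub>G\<^esub> v = v"
      using v subgroup.subset[OF V'(1)] action_unit[OF aut] by auto
    moreover have "act \<one>\<^bsub>G\<^esub> v \<in> V0"
      using small v subgroup.one_closed[OF W(1)] by blast
    ultimately show "v \<in> ?K"
      using small v by (auto simp: invariant_core_def)
  qed
  then have "openin TH ?K"
    using subgroup_openin_if_contains_nbhd[OF TH K V'(2) subgroup.one_closed[OF V'(1)]] by blast
  moreover have "?K \<subseteq> V"
    using V0(3) by (auto simp: invariant_core_def)
  moreover have "act w k \<in> ?K" if "w \<in> W" "k \<in> ?K" for w k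
    using invariant_core_invariant[OF groups aut W(1) subgroup.subset[OF V0(1)] that] .
  ultimately show thesis
    using that K W by blast
qed

theorem corollary3p4:
  fixes G :: "('g, 'c) monoid_scheme" and TG :: "'g topology"
    and H :: "('h, 'd) monoid_scheme" and TH :: "'h topology"
    and act :: "'g \<Rightarrow> 'h \<Rightarrow> 'h"
  assumes "non_archimedean G TG"
    and "non_archimedean H TH"
    and "G_group G TG H TH act"
  shows "non_archimedean (semidirect_product H G act) (prod_topology TH TG)"
  unfolding non_archimedean_def
proof (intro conjI allI impI)
  have groups: "group G" "group H"
    using assms(1,2) by (simp_all add: non_archimedean_def topological_group_def)
  show "topological_group (semidirect_product H G act) (prod_topology TH TG)"
    using assms by (intro topological_group_semidirect_product) (simp_all add: non_archimedean_def)
  fix U assume "openin (prod_topology TH TG) U \<and> \<one>\<^bsub>semidirect_product H G act\<^esub> \<in> U"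
  then obtain V N where V: "openin TH V" "\<one>\<^bsub>H\<^esub> \<in> V" and N: "openin TG N" "\<one>\<^bsub>G\<^esub> \<in> N"
    and "V \<times> N \<subseteq> U"
    by (metis openin_prod_topology_alt semidirect_product_one)
  moreover obtain K W where "subgroup K H" "openin TH K" "K \<subseteq> V"
    and "subgroup W G" "openin TG W" "W \<subseteq> N"
    and "\<And>w k. w \<in> W \<Longrightarrow> k \<in> K \<Longrightarrow> act w k \<in> K"
    using invariant_open_subgroups[OF assms V N] by blast
  ultimately show "\<exists>S. subgroup S (semidirect_product H G act) \<and>
                       openin (prod_topology TH TG) S \<and> S \<subseteq> U"
    using semidirect_product_subgroup[OF groups G_group_acts_by_automorphisms[OF assms(3)]]
    by (intro exI[of _ "K \<times> W"]) (auto simp: openin_prod_Times_iff)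
qed

end
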